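(* Let $\mathit{pts}_1,\ldots,\mathit{pts}_n \in \mathit{PTS}$ be points-to types and let $q_1,\ldots,q_n \in [0,1]$ satisfy $q_1+\cdots+q_n \le 1$. Then the map $\nabla((\mathit{pts}_1,q_1),\ldots,(\mathit{pts}_n,q_n)) : \mathit{Var} \to 2^{\mathit{Addrs}_p}$ is a points-to type, i.e. it belongs to $\mathit{PTS}$.
   Context: $\mathit{Var}$ is a finite set of program variables. $\mathit{Addrs}=\{x' \mid x\in\mathit{Var}\}$ is a set of symbolic addresses (one per variable) and $\mathit{Addrs}_p=\mathit{Addrs}\times[0,1]$. $\textit{Pre-PTS}$ is the set of maps $\mathit{pts}:\mathit{Var}\to 2^{\mathit{Addrs}_p}$ such that for all $x,y\in\mathit{Var}$, if $(y',p_1),(y',p_2)\in\mathit{pts}(x)$ then $p_1=p_2$. For $\mathit{pts}\in\textit{Pre-PTS}$ and $x\in\mathit{Var}$, $\sum_{\mathit{pts}} x=\sum_{(z',p)\in\mathit{pts}(x)} p$ and $A_{\mathit{pts}}(x)=\{z'\mid \exists p>0.\ (z',p)\in\mathit{pts}(x)\}$. The set of points-to types is $\mathit{PTS}=\{\mathit{pts}\in\textit{Pre-PTS}\mid \forall x\in\mathit{Var}.\ \sum_{\mathit{pts}} x\le 1\}$. For $\mathit{pts}_1,\ldots,\mathit{pts}_n\in\mathit{PTS}$ and weights $q_1,\ldots,q_n\in[0,1]$ with sum $\le 1$, the map $\nabla((\mathit{pts}_1,q_1),\ldots,(\mathit{pts}_n,q_n))$ is defined by $\nabla((\mathit{pts}_1,q_1),\ldots,(\mathit{pts}_n,q_n))(x)=\{(z',p)\mid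 (\exists i.\ z'\in A_{\mathit{pts}_i}(x))\wedge p=\sum_{k:\ (z',p_k)\in\mathit{pts}_k(x)} q_k\, p_k\}$. *)

theory Defs
  imports Complex_Main
begin

text \<open>Program variables form a finite type 'v.  The symbolic address x' of a
variable x is Addr x; so Addrs = range Addr (one address per variable).\<close>

datatype 'v addr = Addr 'v

definition Addrs_p :: "('v addr \<times> real) set" where
  "Addrs_p = {(a, p). a \<in> range Addr \<and> 0 \<le> p \<and> p \<le> 1}"

type_synonym 'v ptsmap = "'v \<Rightarrow> ('v addr \<times> real) set"

definition Pre_PTS :: "('v::finite) ptsmap set" where
  "Pre_PTS = {pts. (\<forall>x. pts x \<subseteq> Addrs_p) \<and>
     (\<forall>x y p1 p2. (Addr y, p1) \<in> pts x \<and> (Addr y, p2) \<in> pts x \<longrightarrow> p1 = p2)}"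

definition sum_pts :: "('v::finite) ptsmap \<Rightarrow> 'v \<Rightarrow> real" where
  "sum_pts pts x = (\<Sum>(z, p)\<in>pts x. p)"

definition A_pts :: "('v::finite) ptsmap \<Rightarrow> 'v \<Rightarrow> 'v addr set" where
  "A_pts pts x = {z. \<exists>p>0. (z, p) \<in> pts x}"

definition PTS :: "('v::finite) ptsmap set" where
  "PTS = {pts \<in> Pre_PTS. \<forall>x. sum_pts pts x \<le> 1}"

definition nabla :: "nat \<Rightarrow> (nat \<Rightarrow> ('v::finite) ptsmap) \<Rightarrow> (nat \<Rightarrow> real) \<Rightarrow> 'v ptsmap" where
  "nabla n pts q x = {(z, p). (\<exists>i\<in>{1..n}. z \<in> A_pts (pts i) x) \<and>
      p = (\<Sum>(k, pk)\<in>{(k, pk). k \<in> {1..n} \<and> (z, pk) \<in> pts k x}. q k * pk)}"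

end

theory Submission
  imports Defs
begin

text \<open>Every entry pts x of a pre-points-to type is the graph of a partial function from
addresses to [0,1].  Reading it as a total weight function (0 off its domain), the nabla
entry at x is the graph of the convex combination of the weight functions of the pts k x,
restricted to the addresses that occur with positive weight somewhere.  Summing over all
addresses and swapping the two finite sums bounds its total weight by the sum of the q k.\<close>

definition weight :: "('a \<times> real) set \<Rightarrow> 'a \<Rightarrow> real" where
  "weight P z = (if \<exists>p. (z, p) \<in> P then THE p. (z, p) \<in> P else 0)"

lemma weight_eq: "single_valued P \<Longrightarrow> (z, p) \<in> P \<Longrightarrow> weight P z = p"
  unfolding weight_def single_valued_def by (auto intro: the_equality)

lemma weight_notin_Domain: "z \<notin> Domain P \<Longrightarrow> weight P z = 0"
  unfolding weight_def by auto

lemma sum_snd_single_valued: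
  assumes "single_valued P" "finite S" "Domain P \<subseteq> S"
  shows "(\<Sum>(z, p)\<in>P. p) = (\<Sum>z\<in>S. weight P z)"
proof -
  have "P = (\<lambda>z. (z, weight P z)) ` Domain P"
    using weight_eq[OF assms(1)] by force
  then have "(\<Sum>(z, p)\<in>P. p) = (\<Sum>z\<in>Domain P. weight P z)"
    by (metis (no_types, lifting) case_prod_conv inj_onI prod.inject sum.reindex_cong)
  also have "\<dots> = (\<Sum>z\<in>S. weight P z)"
    using assms(2,3) by (intro sum.mono_neutral_left) (auto simp: weight_notin_Domain)
  finally show ?thesis .
qed

lemma sum_fibres_single_valued:
  assumes "finite K" "\<forall>k\<in>K. single_valued (P k)"
  shows "(\<Sum>(k, p)\<in>{(k, p). k \<in> K \<and> (z, p) \<in> P k}. c k * p) = (\<Sum>k\<in>K. c k * weight (P k) z)"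
proof -
  let ?K = "{k \<in> K. z \<in> Domain (P k)}"
  have "{(k, p). k \<in> K \<and> (z, p) \<in> P k} = (\<lambda>k. (k, weight (P k) z)) ` ?K"
    using assms(2) weight_eq by force
  then have "(\<Sum>(k, p)\<in>{(k, p). k \<in> K \<and> (z, p) \<in> P k}. c k * p) = (\<Sum>k\<in>?K. c k * weight (P k) z)"
    by (simp add: sum.reindex inj_on_def)
  also have "\<dots> = (\<Sum>k\<in>K. c k * weight (P k) z)"
    using assms(1) by (intro sum.mono_neutral_left) (auto simp: weight_notin_Domain)
  finally show ?thesis .
qed

lemma sum_convex_combination_le_1:
  fixes w :: "'i \<Rightarrow> 'a::finite \<Rightarrow> real"
  assumes "finite K" "\<forall>k\<in>K. 0 \<le> q k" "sum q K \<le> 1"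
    and "\<forall>k\<in>K. \<forall>z. 0 \<le> w k z" "\<forall>k\<in>K. (\<Sum>z\<in>UNIV. w k z) \<le> 1"
  shows "(\<Sum>z\<in>S. \<Sum>k\<in>K. q k * w k z) \<le> 1"
proof -
  have "(\<Sum>z\<in>S. \<Sum>k\<in>K. q k * w k z) \<le> (\<Sum>z\<in>UNIV. \<Sum>k\<in>K. q k * w k z)"
    using assms(2,4) by (intro sum_mono2) (auto intro!: sum_nonneg)
  also have "\<dots> = (\<Sum>k\<in>K. q k * (\<Sum>z\<in>UNIV. w k z))"
    by (simp add: sum.swap[of _ UNIV] sum_distrib_left)
  also have "\<dots> \<le> sum q K"
    using assms(2,5) by (intro sum_mono) (simp add: mult_left_le)
  finally show ?thesis using assms(3) by linarith
qed

lemma UNIV_addr: "UNIV = range Addr"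
  by (metis addr.exhaust surj_def)

instance addr :: (finite) finite
  by standard (simp add: UNIV_addr)

lemma Addrs_p_eq: "Addrs_p = UNIV \<times> {0..1}"
  unfolding Addrs_p_def by (auto simp: UNIV_addr[symmetric])

lemma Pre_PTS_iff: "pts \<in> Pre_PTS \<longleftrightarrow> (\<forall>x. pts x \<subseteq> UNIV \<times> {0..1} \<and> single_valued (pts x))"
proof -
  have "single_valued P \<longleftrightarrow> (\<forall>y p1 p2. (Addr y, p1) \<in> P \<and> (Addr y, p2) \<in> P \<longrightarrow> p1 = p2)"
    for P :: "('v addr \<times> real) set"
    unfolding single_valued_def by (metis addr.exhaust)
  then show ?thesis
    unfolding Pre_PTS_def Addrs_p_eq by blast
qed

lemma weight_Pre_PTS_nonneg:
  assumes "pts \<in> Pre_PTS"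
  shows "0 \<le> weight (pts x) z"
proof (cases "z \<in> Domain (pts x)")
  case True
  then obtain p where "(z, p) \<in> pts x" by blast
  with assms show ?thesis by (force simp: Pre_PTS_iff weight_eq)
qed (simp add: weight_notin_Domain)

lemma sum_pts_eq_sum_weight: "pts \<in> Pre_PTS \<Longrightarrow> sum_pts pts x = (\<Sum>z\<in>UNIV. weight (pts x) z)"
  unfolding sum_pts_def by (intro sum_snd_single_valued) (auto simp: Pre_PTS_iff)

lemma graph_in_PTS:
  fixes f :: "'v::finite \<Rightarrow> 'v addr \<Rightarrow> real"
  assumes "\<forall>x. pts x = (\<lambda>z. (z, f x z)) ` A x" "\<forall>x z. 0 \<le> f x z" "\<forall>x. sum (f x) (A x) \<le> 1"
  shows "pts \<in> PTS"
proof -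
  have "f x z \<le> 1" if "z \<in> A x" for x z
    using member_le_sum[of z "A x" "f x"] assms(2,3) that by (metis finite order_trans)
  then have "pts \<in> Pre_PTS"
    using assms(1,2) by (auto simp: Pre_PTS_iff single_valued_def)
  moreover have "sum_pts pts x \<le> 1" for x
    using assms(1,3) by (simp add: sum_pts_def sum.reindex inj_on_def)
  ultimately show ?thesis unfolding PTS_def by blast
qed

lemma nabla_eq_graph:
  assumes "\<forall>k\<in>{1..n}. single_valued (pts k x)"
  shows "nabla n pts q x =
    (\<lambda>z. (z, \<Sum>k=1..n. q k * weight (pts k x) z)) ` {z. \<exists>i\<in>{1..n}. z \<in> A_pts (pts i) x}"
  unfolding nabla_def sum_fibres_single_valued[OF finite_atLeastAtMost assms] by auto

theorem lemma1:
  fixes n :: nat and pts :: "nat \<Rightarrow> ('v::finite) ptsmap" and q :: "nat \<Rightarrow> real"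
  assumes "\<forall>i\<in>{1..n}. pts i \<in> PTS"
    and "\<forall>i\<in>{1..n}. 0 \<le> q i \<and> q i \<le> 1"
    and "(\<Sum>i=1..n. q i) \<le> 1"
  shows "nabla n pts q \<in> PTS"
proof (rule graph_in_PTS)
  have pre: "\<forall>k\<in>{1..n}. pts k \<in> Pre_PTS" and tot: "\<forall>k\<in>{1..n}. \<forall>x. sum_pts (pts k) x \<le> 1"
    using assms(1) by (auto simp: PTS_def)
  show "\<forall>x. nabla n pts q x = (\<lambda>z. (z, \<Sum>k=1..n. q k * weight (pts k x) z)) `
      {z. \<exists>i\<in>{1..n}. z \<in> A_pts (pts i) x}"
    using pre by (intro allI nabla_eq_graph) (simp add: Pre_PTS_iff)
  show "\<forall>x z. 0 \<le> (\<Sum>k=1..n. q k * weight (pts k x) z)"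
    using assms(2) pre by (auto intro!: sum_nonneg mult_nonneg_nonneg weight_Pre_PTS_nonneg)
  show "\<forall>x. (\<Sum>z\<in>{z. \<exists>i\<in>{1..n}. z \<in> A_pts (pts i) x}. \<Sum>k=1..n. q k * weight (pts k x) z) \<le> 1"
    using assms pre tot by (auto intro!: sum_convex_combination_le_1
        simp: weight_Pre_PTS_nonneg sum_pts_eq_sum_weight[symmetric])
qed

end
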